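(* Let $K$ be a (not necessarily associative) ring with identity and $L$ a commutative associative ring with identity, and let $q\colon K\to L$ be a multiplicative quadratic map with $f(a,b)=q(a+b)-q(a)-q(b)$. Let $F$ be a subring of $L$ such that $K$ is an $F$-algebra, $q$ is $F$-quadratic, and every finitely generated $F$-submodule of $K$ is a free $F$-module. Let $\tilde K=L\otimes_F K$ (an $L$-algebra with $(\lambda\otimes a)(\mu\otimes b)=\lambda\mu\otimes ab$), write $\lambda a$ for $\lambda\otimes a$, and define $\tilde q\colon\tilde K\to L$ by $$\tilde q\Big(\sum_{i=1}^n\lambda_i a_i\Big)=\sum_{i=1}^n\lambda_i^2q(a_i)+\sum_{1\le i<j\le n}\lambda_i\lambda_j f(a_i,a_j)$$ for $a_i\in K$, $\lambda_i\in L$. Then $\tilde q$ is well defined and is a multiplicative $L$-quadratic map.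
   Context: A map $q\colon K\to L$ between rings with identity is called a multiplicative quadratic map if (i) $q(ab)=q(a)q(b)$ for all $a,b\in K$; (ii) $q(n\cdot 1_K)=n^2\cdot 1_L$ for all $n\in\mathbb{Z}$; (iii) the map $f\colon K\times K\to L$, $f(a,b)=q(a+b)-q(a)-q(b)$, is biadditive. If $F$ is a commutative associative ring such that $K$ and $L$ are $F$-algebras, $q$ is called $F$-quadratic if $f$ is $F$-bilinear and $q(\lambda a)=\lambda^2q(a)$ for all $a\in K$, $\lambda\in F$. *)

theory Defs
  imports Main
begin

class nonassoc_ring_1 = ab_group_add + times + one +
  assumes na_distrib_left: "a * (b + c) = a * b + a * c"
    and na_distrib_right: "(a + b) * c = a * c + b * c"
    and na_mult_1_left: "1 * a = a"
    and na_mult_1_right: "a * 1 = a"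

definition int_mult :: "int \<Rightarrow> 'a::ab_group_add \<Rightarrow> 'a" where
  "int_mult n x = (if n \<ge> 0 then (\<Sum>i<nat n. x) else - (\<Sum>i<nat (- n). x))"

definition qf :: "('k::ab_group_add \<Rightarrow> 'l::ab_group_add) \<Rightarrow> 'k \<Rightarrow> 'k \<Rightarrow> 'l" where
  "qf q a b = q (a + b) - q a - q b"

definition mult_quadratic :: "('k::nonassoc_ring_1 \<Rightarrow> 'l::comm_ring_1) \<Rightarrow> bool" where
  "mult_quadratic q \<longleftrightarrow>
     (\<forall>a b. q (a * b) = q a * q b) \<and>
     (\<forall>n::int. q (int_mult n 1) = of_int (n ^ 2)) \<and>
     (\<forall>a a' b. qf q (a + a') b = qf q a b + qf q a' b) \<and>
     (\<forall>a b b'. qf q a (b + b') = qf q a b + qf q a b')"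

definition is_subring :: "'l::comm_ring_1 set \<Rightarrow> bool" where
  "is_subring F \<longleftrightarrow> 1 \<in> F \<and> (\<forall>a\<in>F. \<forall>b\<in>F. a + b \<in> F \<and> a * b \<in> F) \<and> (\<forall>a\<in>F. - a \<in> F)"

definition F_algebra :: "'l::comm_ring_1 set \<Rightarrow> ('l \<Rightarrow> 'k::nonassoc_ring_1 \<Rightarrow> 'k) \<Rightarrow> bool" where
  "F_algebra F sm \<longleftrightarrow>
     (\<forall>c\<in>F. \<forall>a b. sm c (a + b) = sm c a + sm c b) \<and>
     (\<forall>c\<in>F. \<forall>d\<in>F. \<forall>a. sm (c + d) a = sm c a + sm d a) \<and>
     (\<forall>c\<in>F. \<forall>d\<in>F. \<forall>a. sm (c * d) a = sm c (sm d a)) \<and>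
     (\<forall>a. sm 1 a = a) \<and>
     (\<forall>c\<in>F. \<forall>a b. sm c (a * b) = sm c a * b \<and> sm c (a * b) = a * sm c b)"

definition F_quadratic :: "'l::comm_ring_1 set \<Rightarrow> ('l \<Rightarrow> 'k::nonassoc_ring_1 \<Rightarrow> 'k) \<Rightarrow> ('k \<Rightarrow> 'l) \<Rightarrow> bool" where
  "F_quadratic F sm q \<longleftrightarrow>
     (\<forall>c\<in>F. \<forall>a b. qf q (sm c a) b = c * qf q a b \<and> qf q a (sm c b) = c * qf q a b) \<and>
     (\<forall>a a' b. qf q (a + a') b = qf q a b + qf q a' b) \<and>
     (\<forall>a b b'. qf q a (b + b') = qf q a b + qf q a b') \<and>
     (\<forall>c\<in>F. \<forall>a. q (sm c a) = c ^ 2 * q a)"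

definition F_span :: "'l::comm_ring_1 set \<Rightarrow> ('l \<Rightarrow> 'k::nonassoc_ring_1 \<Rightarrow> 'k) \<Rightarrow> 'k set \<Rightarrow> 'k set" where
  "F_span F sm S = {(\<Sum>s\<in>T. sm (c s) s) | T c. finite T \<and> T \<subseteq> S \<and> (\<forall>s\<in>T. c s \<in> F)}"

definition F_lin_indep :: "'l::comm_ring_1 set \<Rightarrow> ('l \<Rightarrow> 'k::nonassoc_ring_1 \<Rightarrow> 'k) \<Rightarrow> 'k set \<Rightarrow> bool" where
  "F_lin_indep F sm B \<longleftrightarrow>
     (\<forall>T c. finite T \<and> T \<subseteq> B \<and> (\<forall>s\<in>T. c s \<in> F) \<and> (\<Sum>s\<in>T. sm (c s) s) = 0
        \<longrightarrow> (\<forall>s\<in>T. c s = 0))"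

definition F_free :: "'l::comm_ring_1 set \<Rightarrow> ('l \<Rightarrow> 'k::nonassoc_ring_1 \<Rightarrow> 'k) \<Rightarrow> 'k set \<Rightarrow> bool" where
  "F_free F sm M \<longleftrightarrow> (\<exists>B. B \<subseteq> M \<and> F_lin_indep F sm B \<and> F_span F sm B = M)"

definition fg_submodules_free :: "'l::comm_ring_1 set \<Rightarrow> ('l \<Rightarrow> 'k::nonassoc_ring_1 \<Rightarrow> 'k) \<Rightarrow> bool" where
  "fg_submodules_free F sm \<longleftrightarrow> (\<forall>S. finite S \<longrightarrow> F_free F sm (F_span F sm S))"

text \<open>Tensor product L \<otimes>_F K: elements are represented by lists [(\<lambda>_1,a_1),...,(\<lambda>_n,a_n)]
  standing for \<Sum> \<lambda>_i \<otimes> a_i.  Two lists represent the same element iff the difference of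
  their formal sums (in the free abelian group on L \<times> K) lies in the subgroup generated by
  the F-balanced biadditivity relations.\<close>
definition gen :: "'a \<Rightarrow> 'a \<Rightarrow> int" where
  "gen p = (\<lambda>x. if x = p then 1 else 0)"

inductive_set tensor_rel :: "'l::comm_ring_1 set \<Rightarrow> ('l \<Rightarrow> 'k::nonassoc_ring_1 \<Rightarrow> 'k) \<Rightarrow> ('l \<times> 'k \<Rightarrow> int) set"
  for F sm where
  zero: "(\<lambda>x. 0) \<in> tensor_rel F sm"
| add: "u \<in> tensor_rel F sm \<Longrightarrow> v \<in> tensor_rel F sm \<Longrightarrow> (\<lambda>x. u x + v x) \<in> tensor_rel F sm"
| neg: "u \<in> tensor_rel F sm \<Longrightarrow> (\<lambda>x. - u x) \<in> tensor_rel F sm"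
| add_left: "(\<lambda>x. gen (l + l', a) x - gen (l, a) x - gen (l', a) x) \<in> tensor_rel F sm"
| add_right: "(\<lambda>x. gen (l, a + b) x - gen (l, a) x - gen (l, b) x) \<in> tensor_rel F sm"
| balanced: "c \<in> F \<Longrightarrow> (\<lambda>x. gen (l * c, a) x - gen (l, sm c a) x) \<in> tensor_rel F sm"

definition formal_sum :: "('l \<times> 'k) list \<Rightarrow> ('l \<times> 'k \<Rightarrow> int)" where
  "formal_sum xs = (\<lambda>x. (\<Sum>p\<leftarrow>xs. gen p x))"

definition tensor_eq :: "'l::comm_ring_1 set \<Rightarrow> ('l \<Rightarrow> 'k::nonassoc_ring_1 \<Rightarrow> 'k) \<Rightarrow>
    ('l \<times> 'k) list \<Rightarrow> ('l \<times> 'k) list \<Rightarrow> bool" where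
  "tensor_eq F sm xs ys \<longleftrightarrow> (\<lambda>x. formal_sum xs x - formal_sum ys x) \<in> tensor_rel F sm"

text \<open>Operations on representatives: addition is concatenation, L-scaling, product.\<close>
definition tscale :: "'l::comm_ring_1 \<Rightarrow> ('l \<times> 'k) list \<Rightarrow> ('l \<times> 'k) list" where
  "tscale c xs = map (\<lambda>(l, a). (c * l, a)) xs"

definition tmul :: "('l::comm_ring_1 \<times> 'k::nonassoc_ring_1) list \<Rightarrow> ('l \<times> 'k) list \<Rightarrow> ('l \<times> 'k) list" where
  "tmul xs ys = concat (map (\<lambda>(l, a). map (\<lambda>(m, b). (l * m, a * b)) ys) xs)"

definition tq :: "('k::nonassoc_ring_1 \<Rightarrow> 'l::comm_ring_1) \<Rightarrow> ('l \<times> 'k) list \<Rightarrow> 'l" where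
  "tq q xs =
     (\<Sum>i<length xs. (fst (xs ! i)) ^ 2 * q (snd (xs ! i))) +
     (\<Sum>i<length xs. \<Sum>j<length xs. if i < j
        then fst (xs ! i) * fst (xs ! j) * qf q (snd (xs ! i)) (snd (xs ! j)) else 0)"

definition tf :: "('k::nonassoc_ring_1 \<Rightarrow> 'l::comm_ring_1) \<Rightarrow> ('l \<times> 'k) list \<Rightarrow> ('l \<times> 'k) list \<Rightarrow> 'l" where
  "tf q xs ys = tq q (xs @ ys) - tq q xs - tq q ys"

end

theory Submission
  imports Defs "HOL-Library.Multiset"
begin

(* A representative xs = [(l_1,a_1),...,(l_n,a_n)] of an element of L \<otimes>_F K
   is evaluated by tq, and the polar form
     Bq xs ys = \<Sum>_{i,j} l_i m_j f(a_i, b_j)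
   governs everything: tq (xs @ ys) = tq xs + tq ys + Bq xs ys, so tf = Bq, and Bq is
   visibly biadditive, symmetric and L-bilinear.
   Well-definedness: call xs, ys "tq-equivalent" if tq and all values Bq zs _ agree on them.
   This relation is a congruence for concatenation, contains all permutations, and allows
   cancellation.  Every generator of the tensor relations (biadditivity, F-balancedness)
   relates tq-equivalent lists, because f is biadditive and q is F-quadratic; hence every
   element of tensor_rel is a difference of formal sums of tq-equivalent lists, and
   cancellation yields tq xs = tq ys whenever xs, ys represent the same tensor.
   Multiplicativity: the product of (l,a) with ys is the list lmul l a ys; the identities
   q(ab) = q(a) q(b) and f(ab,a'b') + f(ab',a'b) = f(a,a') f(b,b') give
   tq (lmul l a ys) = l^2 q(a) tq ys and Bq (lmul l a ys) (lmul l' a' ys) = l l' f(a,a') tq ys,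
   from which tq (tmul xs ys) = tq xs * tq ys follows by induction on xs. *)

section \<open>The polar form on representatives\<close>

(* The bilinear form associated with tq; it will turn out to coincide with tf. *)
definition Bq :: "('k::ab_group_add \<Rightarrow> 'l::comm_ring_1) \<Rightarrow> ('l \<times> 'k) list \<Rightarrow> ('l \<times> 'k) list \<Rightarrow> 'l" where
  "Bq q xs ys = (\<Sum>p\<leftarrow>xs. \<Sum>p'\<leftarrow>ys. fst p * fst p' * qf q (snd p) (snd p'))"

lemma sum_list_nested_swap:
  "(\<Sum>x\<leftarrow>xs. \<Sum>y\<leftarrow>ys. g x y) = (\<Sum>y\<leftarrow>ys. \<Sum>x\<leftarrow>xs. g x y :: 'a::comm_monoid_add)"
  by (induction xs) (simp_all add: sum_list_addf)

lemma qf_sym: "qf q a b = qf q b a"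
  by (simp add: qf_def add.commute)

lemma Bq_sym: "Bq q xs ys = Bq q ys xs"
  unfolding Bq_def by (subst sum_list_nested_swap) (simp add: qf_sym ac_simps)

lemma Bq_append_left: "Bq q (xs @ xs') ys = Bq q xs ys + Bq q xs' ys"
  by (simp add: Bq_def)

lemma Bq_append_right: "Bq q xs (ys @ ys') = Bq q xs ys + Bq q xs ys'"
  by (simp add: Bq_def sum_list_addf)

lemma Bq_singletons: "Bq q [(l, a)] [(m, b)] = l * m * qf q a b"
  by (simp add: Bq_def)

lemma Bq_tscale_left: "Bq q (tscale c xs) ys = c * Bq q xs ys"
  by (simp add: Bq_def tscale_def split_def comp_def sum_list_const_mult[symmetric] mult.assoc)

lemma Bq_tscale_right: "Bq q xs (tscale c ys) = c * Bq q xs ys"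
  by (simp add: Bq_def tscale_def split_def comp_def sum_list_const_mult[symmetric] algebra_simps)

section \<open>Decomposing tq along concatenation\<close>

lemma tq_Nil: "tq q [] = 0"
  by (simp add: tq_def)

lemma tq_Cons: "tq q (x # xs) = fst x ^ 2 * q (snd x) + Bq q [x] xs + tq q xs"
proof -
  let ?cross = "\<lambda>ys i j. if i < j
     then fst (ys ! i) * fst (ys ! j) * qf q (snd (ys ! i)) (snd (ys ! j)) else 0"
  have squares: "(\<Sum>i<length (x # xs). fst ((x # xs) ! i) ^ 2 * q (snd ((x # xs) ! i)))
      = fst x ^ 2 * q (snd x) + (\<Sum>i<length xs. fst (xs ! i) ^ 2 * q (snd (xs ! i)))"
    by (simp add: sum.lessThan_Suc_shift del: sum.lessThan_Suc)
  have cross: "(\<Sum>i<length (x # xs). \<Sum>j<length (x # xs). ?cross (x # xs) i j)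
      = (\<Sum>j<length xs. fst x * fst (xs ! j) * qf q (snd x) (snd (xs ! j)))
        + (\<Sum>i<length xs. \<Sum>j<length xs. ?cross xs i j)"
    by (simp add: sum.lessThan_Suc_shift nth_Cons_Suc del: sum.lessThan_Suc cong: if_cong)
  have "Bq q [x] xs = (\<Sum>j<length xs. fst x * fst (xs ! j) * qf q (snd x) (snd (xs ! j)))"
    by (simp add: Bq_def sum_list_sum_nth atLeast0LessThan)
  then show ?thesis
    using squares cross unfolding tq_def by (simp add: algebra_simps)
qed

lemma tq_single: "tq q [x] = fst x ^ 2 * q (snd x)"
  by (simp add: tq_def)

lemma tq_append: "tq q (xs @ ys) = tq q xs + tq q ys + Bq q xs ys"
proof (induction xs)
  case Nil
  then show ?case by (simp add: tq_Nil Bq_def)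
next
  case (Cons x xs)
  then show ?case
    using tq_Cons[of q x "xs @ ys"] tq_Cons[of q x xs] Bq_append_right[of q "[x]" xs ys]
      Bq_append_left[of q "[x]" xs ys]
    by (simp add: algebra_simps)
qed

lemma tf_eq_Bq: "tf q xs ys = Bq q xs ys"
  by (simp add: tf_def tq_append)

lemma tq_tscale: "tq q (tscale c xs) = c ^ 2 * tq q xs"
proof (induction xs)
  case Nil
  then show ?case by (simp add: tscale_def tq_Nil)
next
  case (Cons x xs)
  obtain l a where x: "x = (l, a)" by fastforce
  have head: "tscale c [x] = [(c * l, a)]" and split: "tscale c (x # xs) = (c * l, a) # tscale c xs"
    unfolding x tscale_def by simp_all
  have cross: "Bq q [(c * l, a)] (tscale c xs) = c * (c * Bq q [x] xs)"
    by (simp only: head[symmetric] Bq_tscale_left Bq_tscale_right)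
  have "tq q (tscale c (x # xs)) = (c * l) ^ 2 * q a + Bq q [(c * l, a)] (tscale c xs) + tq q (tscale c xs)"
    by (simp only: split tq_Cons fst_conv snd_conv)
  also have "\<dots> = c ^ 2 * (l ^ 2 * q a + Bq q [x] xs + tq q xs)"
    by (simp add: cross Cons.IH power2_eq_square algebra_simps)
  also have "\<dots> = c ^ 2 * tq q (x # xs)"
    by (simp add: tq_Cons x)
  finally show ?case .
qed

section \<open>Lists that tq cannot distinguish\<close>

definition tq_equiv :: "('k::nonassoc_ring_1 \<Rightarrow> 'l::comm_ring_1) \<Rightarrow> ('l \<times> 'k) list \<Rightarrow> ('l \<times> 'k) list \<Rightarrow> bool" where
  "tq_equiv q xs ys \<longleftrightarrow> tq q xs = tq q ys \<and> (\<forall>zs. Bq q zs xs = Bq q zs ys)"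

lemma tq_equiv_refl: "tq_equiv q xs xs"
  by (simp add: tq_equiv_def)

lemma tq_equiv_trans: "tq_equiv q xs ys \<Longrightarrow> tq_equiv q ys zs \<Longrightarrow> tq_equiv q xs zs"
  by (simp add: tq_equiv_def)

lemma tq_equiv_append:
  assumes "tq_equiv q xs xs'" and "tq_equiv q ys ys'"
  shows "tq_equiv q (xs @ ys) (xs' @ ys')"
proof -
  have "Bq q xs ys = Bq q xs' ys'"
    using assms Bq_sym[of q xs ys] Bq_sym[of q xs' ys] unfolding tq_equiv_def by metis
  then show ?thesis
    using assms by (simp add: tq_equiv_def tq_append Bq_append_right)
qed

lemma tq_equiv_swap: "tq_equiv q (xs @ ys) (ys @ xs)"
  by (simp add: tq_equiv_def tq_append Bq_append_right Bq_sym[of q xs ys])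

lemma tq_equiv_mset: "mset xs = mset ys \<Longrightarrow> tq_equiv q xs ys"
proof (induction xs arbitrary: ys)
  case Nil
  then show ?case by (simp add: tq_equiv_def)
next
  case (Cons x xs)
  then obtain ys1 ys2 where ys: "ys = ys1 @ x # ys2"
    by (metis list.set_intros(1) set_mset_mset split_list)
  then have "tq_equiv q xs (ys1 @ ys2)"
    using Cons by simp
  then have "tq_equiv q ([x] @ xs) ([x] @ ys1 @ ys2)"
    by (rule tq_equiv_append[OF tq_equiv_refl])
  moreover have "tq_equiv q (([x] @ ys1) @ ys2) ((ys1 @ [x]) @ ys2)"
    by (rule tq_equiv_append[OF tq_equiv_swap tq_equiv_refl])
  ultimately show ?case
    using ys tq_equiv_trans by (metis append.assoc append_Cons append_Nil)
qed

lemma tq_equiv_cancel: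
  assumes sum: "tq_equiv q (xs @ N) (ys @ P)" and PN: "tq_equiv q P N"
  shows "tq_equiv q xs ys"
proof -
  have tq_sum: "tq q xs + tq q N + Bq q xs N = tq q ys + tq q P + Bq q ys P"
    and Bq_sum: "\<And>zs. Bq q zs xs + Bq q zs N = Bq q zs ys + Bq q zs P"
    using sum by (simp_all only: tq_equiv_def tq_append Bq_append_right)
  have tq_PN: "tq q P = tq q N" and Bq_PN: "\<And>zs. Bq q zs P = Bq q zs N"
    using PN by (simp_all add: tq_equiv_def)
  have "Bq q P xs = Bq q P ys"
    using Bq_sum[of P] Bq_PN[of P] by simp
  then have "Bq q xs N = Bq q ys P"
    using Bq_PN[of xs] Bq_sym[of q P xs] Bq_sym[of q P ys] by simp
  then show ?thesis
    using tq_sum Bq_sum tq_PN Bq_PN by (simp add: tq_equiv_def)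
qed

section \<open>Identities for multiplicative quadratic maps\<close>

lemma qf_add_right: "mult_quadratic q \<Longrightarrow> qf q a (b + b') = qf q a b + qf q a b'"
  by (simp add: mult_quadratic_def)

lemma q_add: "q (a + b) = q a + q b + qf q a b"
  by (simp add: qf_def)

lemma q_int_mult: "mult_quadratic q \<Longrightarrow> q (int_mult n 1) = of_int (n ^ 2)"
  by (simp add: mult_quadratic_def)

lemma q_one: "mult_quadratic q \<Longrightarrow> q 1 = 1"
  using q_int_mult[of q 1] by (simp add: int_mult_def)

(* f(a,a) = 2 q(a), since q(a + a) = q(2) q(a) = 4 q(a). *)
lemma qf_self:
  assumes "mult_quadratic q"
  shows "qf q a a = 2 * q a"
proof -
  have "int_mult 2 (1::'a) = 1 + 1"
    by (simp add: int_mult_def numeral_2_eq_2)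
  then have "q (1 + 1) = 4"
    using q_int_mult[OF assms, of 2] by simp
  moreover have "a + a = (1 + 1) * a"
    by (simp add: na_distrib_right na_mult_1_left)
  ultimately have "q (a + a) = 4 * q a"
    using assms by (simp add: mult_quadratic_def)
  then show ?thesis
    by (simp add: qf_def)
qed

lemma qf_mult_left:
  fixes q :: "'k::nonassoc_ring_1 \<Rightarrow> 'l::comm_ring_1"
  assumes mult: "\<And>a b. q (a * b) = q a * q b"
  shows "qf q (a * b) (a * b') = q a * qf q b b'"
proof -
  have "qf q (a * b) (a * b') = q (a * (b + b')) - q (a * b) - q (a * b')"
    by (simp add: qf_def na_distrib_left)
  then show ?thesis
    by (simp add: mult qf_def algebra_simps)
qed

lemma qf_mult_right:
  fixes q :: "'k::nonassoc_ring_1 \<Rightarrow> 'l::comm_ring_1"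
  assumes mult: "\<And>a b. q (a * b) = q a * q b"
  shows "qf q (a * b) (a' * b) = qf q a a' * q b"
proof -
  have "qf q (a * b) (a' * b) = q ((a + a') * b) - q (a * b) - q (a' * b)"
    by (simp add: qf_def na_distrib_right)
  then show ?thesis
    by (simp add: mult qf_def algebra_simps)
qed

(* Expand q((a + a')(b + b')) in two ways; all terms but the mixed ones cancel. *)
lemma qf_mult_mixed:
  fixes q :: "'k::nonassoc_ring_1 \<Rightarrow> 'l::comm_ring_1"
  assumes mult: "\<And>a b. q (a * b) = q a * q b"
    and qf_add: "\<And>a b b'. qf q a (b + b') = qf q a b + qf q a b'"
  shows "qf q (a * b) (a' * b') + qf q (a * b') (a' * b) = qf q a a' * qf q b b'"
proof -
  have qf_add_left: "qf q (x + x') y = qf q x y + qf q x' y" for x x' y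
    using qf_add[of y x x'] by (simp add: qf_sym)
  have expand: "(a + a') * (b + b') = (a * b + a * b') + (a' * b + a' * b')"
    by (simp add: na_distrib_left na_distrib_right add.assoc)
  have product: "q ((a * b + a * b') + (a' * b + a' * b')) = (q a + q a' + qf q a a') * (q b + q b' + qf q b b')"
    using mult[of "a + a'" "b + b'"] unfolding expand q_add[of q a] q_add[of q b] .
  have sum: "q ((a * b + a * b') + (a' * b + a' * b')) =
      q (a * b) + q (a * b') + qf q (a * b) (a * b') + (q (a' * b) + q (a' * b') + qf q (a' * b) (a' * b'))
      + (qf q (a * b) (a' * b) + qf q (a * b) (a' * b') + qf q (a * b') (a' * b) + qf q (a * b') (a' * b'))"
    unfolding q_add[of q "a * b + a * b'"] q_add[of q "a * b"] q_add[of q "a' * b"]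
      qf_add_left[of "a * b" "a * b'"] qf_add[of "a * b" "a' * b" "a' * b'"] qf_add[of "a * b'" "a' * b" "a' * b'"]
    by (simp add: add.assoc)
  have "qf q (a * b) (a * b') = q a * qf q b b'" "qf q (a' * b) (a' * b') = q a' * qf q b b'"
    "qf q (a * b) (a' * b) = qf q a a' * q b" "qf q (a * b') (a' * b') = qf q a a' * q b'"
    by (simp_all only: qf_mult_left[OF mult] qf_mult_right[OF mult])
  then show ?thesis
    using product unfolding sum mult by (simp add: algebra_simps)
qed

section \<open>Multiplicativity of tq\<close>

definition lmul :: "'l::comm_ring_1 \<Rightarrow> 'k::nonassoc_ring_1 \<Rightarrow> ('l \<times> 'k) list \<Rightarrow> ('l \<times> 'k) list" where
  "lmul l a ys = map (\<lambda>(m, b). (l * m, a * b)) ys"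

lemma tmul_Cons: "tmul ((l, a) # xs) ys = lmul l a ys @ tmul xs ys"
  by (simp add: tmul_def lmul_def)

lemma lmul_Cons: "lmul l a ((m, b) # ys) = (l * m, a * b) # lmul l a ys"
  by (simp add: lmul_def)

lemma Bq_lmul_same:
  assumes mult: "\<And>a b. q (a * b) = q a * q b"
  shows "Bq q (lmul l a xs) (lmul l a ys) = l ^ 2 * q a * Bq q xs ys"
  by (simp add: Bq_def lmul_def split_def comp_def qf_mult_left[OF mult] power2_eq_square
      sum_list_const_mult[symmetric] algebra_simps)

(* tq of a left multiple: q is multiplicative, and so f is on common left factors. *)
lemma tq_lmul:
  assumes mult: "\<And>a b. q (a * b) = q a * q b"
  shows "tq q (lmul l a ys) = l ^ 2 * q a * tq q ys"
proof (induction ys)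
  case Nil
  then show ?case by (simp add: lmul_def tq_Nil)
next
  case (Cons y ys)
  obtain m b where y: "y = (m, b)" by fastforce
  have "Bq q [(l * m, a * b)] (lmul l a ys) = l ^ 2 * q a * Bq q [y] ys"
    using Bq_lmul_same[OF mult, of l a "[y]" ys] by (simp add: y lmul_def)
  then show ?case
    using Cons.IH tq_Cons[of q "(l * m, a * b)"] tq_Cons[of q y ys]
    by (simp add: y lmul_Cons tq_single mult power2_eq_square algebra_simps)
qed

lemma Bq_lmul_cross:
  assumes mult: "\<And>a b. q (a * b) = q a * q b"
    and qf_add: "\<And>a b b'. qf q a (b + b') = qf q a b + qf q a b'"
  shows "Bq q [(l * m, a * b)] (lmul l' a' zs) + Bq q (lmul l a zs) [(l' * m, a' * b)]
       = l * l' * qf q a a' * Bq q [(m, b)] zs"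
proof -
  have "Bq q [(l * m, a * b)] (lmul l' a' zs) + Bq q (lmul l a zs) [(l' * m, a' * b)]
      = (\<Sum>p\<leftarrow>zs. l * l' * m * fst p * (qf q (a * b) (a' * snd p) + qf q (a * snd p) (a' * b)))"
    by (simp add: Bq_def lmul_def split_def sum_list_addf[symmetric] algebra_simps)
  also have "\<dots> = (\<Sum>p\<leftarrow>zs. l * l' * qf q a a' * (m * fst p * qf q b (snd p)))"
    by (simp only: qf_mult_mixed[OF mult qf_add]) (simp add: algebra_simps)
  also have "\<dots> = l * l' * qf q a a' * Bq q [(m, b)] zs"
    by (simp add: Bq_def sum_list_const_mult)
  finally show ?thesis .
qed

lemma Bq_lmul:
  assumes mult: "\<And>a b. q (a * b) = q a * q b"
    and qf_add: "\<And>a b b'. qf q a (b + b') = qf q a b + qf q a b'"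
  shows "Bq q (lmul l a ys) (lmul l' a' ys) = l * l' * qf q a a' * tq q ys"
proof (induction ys)
  case Nil
  then show ?case by (simp add: lmul_def Bq_def tq_Nil)
next
  case (Cons y ys)
  obtain m b where y: "y = (m, b)" by fastforce
  let ?u = "(l * m, a * b)" and ?v = "(l' * m, a' * b)"
  have "Bq q (lmul l a (y # ys)) (lmul l' a' (y # ys))
      = Bq q [?u] [?v] + (Bq q [?u] (lmul l' a' ys) + Bq q (lmul l a ys) [?v])
        + Bq q (lmul l a ys) (lmul l' a' ys)"
    using Bq_append_left[of q "[?u]" "lmul l a ys"] Bq_append_right[of q _ "[?v]" "lmul l' a' ys"]
    by (simp add: y lmul_Cons algebra_simps)
  also have "\<dots> = l * l' * qf q a a' * tq q (y # ys)"
    unfolding Bq_lmul_cross[OF mult qf_add] Cons.IH tq_Cons[of q y ys]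
    by (simp add: y Bq_singletons tq_single qf_mult_right[OF mult] power2_eq_square algebra_simps)
  finally show ?case .
qed

lemma Bq_lmul_tmul:
  assumes mult: "\<And>a b. q (a * b) = q a * q b"
    and qf_add: "\<And>a b b'. qf q a (b + b') = qf q a b + qf q a b'"
  shows "Bq q (lmul l a ys) (tmul xs ys) = Bq q [(l, a)] xs * tq q ys"
proof (induction xs)
  case Nil
  then show ?case by (simp add: tmul_def Bq_def)
next
  case (Cons x xs)
  obtain l' a' where x: "x = (l', a')" by fastforce
  show ?case
    using Bq_append_right[of q "[(l, a)]" "[x]" xs]
    by (simp add: x tmul_Cons Bq_append_right Cons.IH Bq_lmul[OF mult qf_add] Bq_singletons
        algebra_simps)
qed

lemma tq_tmul:
  assumes "mult_quadratic q"
  shows "tq q (tmul xs ys) = tq q xs * tq q ys"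
proof -
  have mult: "\<And>a b. q (a * b) = q a * q b" and qf_add: "\<And>a b b'. qf q a (b + b') = qf q a b + qf q a b'"
    using assms by (simp_all add: mult_quadratic_def)
  show ?thesis
  proof (induction xs)
    case Nil
    then show ?case by (simp add: tmul_def tq_Nil)
  next
    case (Cons x xs)
    obtain l a where x: "x = (l, a)" by fastforce
    show ?case
      using tq_Cons[of q x xs]
      by (simp add: x tmul_Cons tq_append tq_lmul[OF mult] Cons.IH Bq_lmul_tmul[OF mult qf_add]
          tq_single algebra_simps)
  qed
qed

section \<open>Well-definedness on the tensor product\<close>

lemma tq_equiv_add_left:
  assumes "mult_quadratic q"
  shows "tq_equiv q [(l + l', a)] [(l, a), (l', a)]"
proof -
  have "tq q [(l, a), (l', a)] = l ^ 2 * q a + l * l' * qf q a a + l' ^ 2 * q a"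
    by (simp add: tq_Cons tq_Nil Bq_def)
  then have "tq q [(l + l', a)] = tq q [(l, a), (l', a)]"
    by (simp add: tq_single qf_self[OF assms] power2_eq_square algebra_simps)
  moreover have "Bq q zs [(l + l', a)] = Bq q zs [(l, a), (l', a)]" for zs
    by (simp add: Bq_def sum_list_addf algebra_simps)
  ultimately show ?thesis
    by (simp add: tq_equiv_def)
qed

lemma tq_equiv_add_right:
  assumes "mult_quadratic q"
  shows "tq_equiv q [(l, a + b)] [(l, a), (l, b)]"
proof -
  have "tq q [(l, a), (l, b)] = l ^ 2 * q a + l * l * qf q a b + l ^ 2 * q b"
    by (simp add: tq_Cons tq_Nil Bq_def)
  moreover have "tq q [(l, a + b)] = l ^ 2 * (q a + q b + qf q a b)"
    by (simp only: tq_single fst_conv snd_conv q_add)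
  ultimately have "tq q [(l, a + b)] = tq q [(l, a), (l, b)]"
    by (simp add: power2_eq_square algebra_simps)
  moreover have "Bq q zs [(l, a + b)] = Bq q zs [(l, a), (l, b)]" for zs
    by (simp add: Bq_def qf_add_right[OF assms] sum_list_addf algebra_simps)
  ultimately show ?thesis
    by (simp add: tq_equiv_def)
qed

lemma tq_equiv_balanced:
  assumes "F_quadratic F sm q" and "c \<in> F"
  shows "tq_equiv q [(l * c, a)] [(l, sm c a)]"
proof -
  have "qf q b (sm c a) = c * qf q b a" for b
    using assms unfolding F_quadratic_def by blast
  moreover have "q (sm c a) = c ^ 2 * q a"
    using assms unfolding F_quadratic_def by blast
  ultimately show ?thesis
    by (simp add: tq_equiv_def tq_single Bq_def power2_eq_square algebra_simps)
qed

lemma formal_sum_append: "formal_sum (xs @ ys) x = formal_sum xs x + formal_sum ys x"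
  by (simp add: formal_sum_def)

lemma formal_sum_count: "formal_sum xs x = int (count (mset xs) x)"
  by (induction xs) (auto simp: formal_sum_def gen_def)

lemma tensor_rel_tq_equiv:
  assumes m: "mult_quadratic q" and fq: "F_quadratic F sm q" and r: "r \<in> tensor_rel F sm"
  shows "\<exists>P N. (\<forall>x. r x = formal_sum P x - formal_sum N x) \<and> tq_equiv q P N"
  using r
proof induction
  case zero
  show ?case by (rule exI[of _ "[]"], rule exI[of _ "[]"]) (simp add: formal_sum_def tq_equiv_def)
next
  case (add u v)
  then obtain P1 N1 P2 N2 where
    "\<forall>x. u x = formal_sum P1 x - formal_sum N1 x" "tq_equiv q P1 N1"
    "\<forall>x. v x = formal_sum P2 x - formal_sum N2 x" "tq_equiv q P2 N2"
    by blast
  then show ?case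
    by (intro exI[of _ "P1 @ P2"] exI[of _ "N1 @ N2"]) (simp add: formal_sum_append tq_equiv_append)
next
  case (neg u)
  then obtain P N where "\<forall>x. u x = formal_sum P x - formal_sum N x" "tq_equiv q P N"
    by blast
  then show ?case
    by (intro exI[of _ N] exI[of _ P]) (auto simp: tq_equiv_def)
next
  case (add_left l l' a)
  show ?case
    using tq_equiv_add_left[OF m, of l l' a]
    by (intro exI[of _ "[(l + l', a)]"] exI[of _ "[(l, a), (l', a)]"]) (simp add: formal_sum_def)
next
  case (add_right l a b)
  show ?case
    using tq_equiv_add_right[OF m, of l a b]
    by (intro exI[of _ "[(l, a + b)]"] exI[of _ "[(l, a), (l, b)]"]) (simp add: formal_sum_def)
next
  case (balanced c l a)
  show ?case
    using tq_equiv_balanced[OF fq balanced, of l a]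
    by (intro exI[of _ "[(l * c, a)]"] exI[of _ "[(l, sm c a)]"]) (simp add: formal_sum_def)
qed

(* If xs - ys = P - N with P, N tq-equivalent, then xs @ N and ys @ P are permutations
   of each other, and cancelling P ~ N leaves tq xs = tq ys. *)
lemma tq_well_defined:
  assumes "mult_quadratic q" and "F_quadratic F sm q" and "tensor_eq F sm xs ys"
  shows "tq q xs = tq q ys"
proof -
  obtain P N where PN: "\<forall>x. formal_sum xs x - formal_sum ys x = formal_sum P x - formal_sum N x"
    and equiv: "tq_equiv q P N"
    using tensor_rel_tq_equiv[OF assms(1,2)] assms(3) unfolding tensor_eq_def by blast
  have "formal_sum (xs @ N) x = formal_sum (ys @ P) x" for x
    using spec[OF PN, of x] by (simp add: formal_sum_append algebra_simps)
  then have "mset (xs @ N) = mset (ys @ P)"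
    by (intro multiset_eqI) (simp only: formal_sum_count of_nat_eq_iff)
  then have "tq_equiv q xs ys"
    using tq_equiv_cancel tq_equiv_mset equiv by blast
  then show ?thesis
    by (simp add: tq_equiv_def)
qed

theorem proposition2p3:
  fixes F :: "'l::comm_ring_1 set"
    and sm :: "'l \<Rightarrow> 'k::nonassoc_ring_1 \<Rightarrow> 'k"
    and q :: "'k \<Rightarrow> 'l"
  assumes "mult_quadratic q"
    and "is_subring F"
    and "F_algebra F sm"
    and "F_quadratic F sm q"
    and "fg_submodules_free F sm"
  shows "(\<forall>xs ys. tensor_eq F sm xs ys \<longrightarrow> tq q xs = tq q ys)
    \<and> (\<forall>xs ys. tq q (tmul xs ys) = tq q xs * tq q ys)
    \<and> (\<forall>n::int. tq q [(of_int n, 1)] = of_int (n ^ 2))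
    \<and> (\<forall>xs xs' ys. tf q (xs @ xs') ys = tf q xs ys + tf q xs' ys)
    \<and> (\<forall>xs ys ys'. tf q xs (ys @ ys') = tf q xs ys + tf q xs ys')
    \<and> (\<forall>c xs ys. tf q (tscale c xs) ys = c * tf q xs ys \<and> tf q xs (tscale c ys) = c * tf q xs ys)
    \<and> (\<forall>c xs. tq q (tscale c xs) = c ^ 2 * tq q xs)"
proof (intro conjI allI impI)
  show "tq q xs = tq q ys" if "tensor_eq F sm xs ys" for xs ys
    using tq_well_defined[OF assms(1,4) that] .
  show "tq q (tmul xs ys) = tq q xs * tq q ys" for xs ys
    using tq_tmul[OF assms(1)] .
  show "tq q [(of_int n, 1)] = of_int (n ^ 2)" for n :: int
    by (simp add: tq_single q_one[OF assms(1)])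
qed (simp_all only: tf_eq_Bq Bq_append_left Bq_append_right Bq_tscale_left Bq_tscale_right tq_tscale)

end
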